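(* Consider the battery cost-minimization problem described in the context, with fixed data $t_0, T, K, Z, T_c, D$, $C_{\mathrm{ref}}\ge 0$, and let $S_1,S_2,S_3$ be the sets defined in the context. Suppose that at least one of the following holds: (i) $t_0 \in S_1$; or (ii) $S_3$ is empty; or (iii) $t_0 \notin S_1$ (equivalently $t_0\in S_2\cup S_3$), $S_3$ is nonempty, $S_1$ is nonempty, and there exists $t_1 \in S_1$ such that $t_1 < t_3$ for all $t_3 \in S_3$. Then either there is no feasible control, or the only feasible control is $u(t)=0$ for all $t\in[t_0,t_0+T]$.
   Context: Data: a time interval $[t_0,t_0+T]$ with $T>0$; a PV power profile $P_{\mathrm{pv}}(t)\ge 0$ and a (piecewise continuous) load profile $P_{\mathrm{load}}(t)$ on this interval; a time-of-use price $C_g(t)\ge 0$; constants $0<\eta_{\mathrm{pv}}\le 1$, $0<\eta_B\le 1$, $K>0$, $Z>0$, $T_c>0$, $D>0$, and a battery capacity $C_{\mathrm{ref}}\ge 0$. A control is a function $u$ on $[t_0,t_0+T]$; it determines states $E_B(t)$ (battery charge) and $\Delta C(t)$ (cumulative capacity loss) via $E_B(t_0)=0$, $\Delta C(t_0)=0$, $\frac{dE_B}{dt}=u(t)/\eta_B$ if $u(t)<0$ and $\frac{dE_B}{dt}=\eta_B u(t)$ otherwise; $\frac{d\Delta C}{dt}=-Z u(t)/\eta_B$ if $u(t)<0$ and $\frac{d\Delta C}{dt}=0$ otherwise. A control is feasible if for all $t\in[t_0,t_0+T]$: $E_B(t)\ge 0$; $E_B(t)+\Delta C(t)\le C_{\mathrm{ref}}$;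 $\eta_B u(t) T_c+\Delta C(t)\le C_{\mathrm{ref}}$ whenever $u(t)>0$; $-\frac{u(t)}{\eta_B}T_c+\Delta C(t)\le C_{\mathrm{ref}}$ whenever $u(t)<0$; and $P_{\mathrm{load}}(t)-\eta_{\mathrm{pv}}P_{\mathrm{pv}}(t)+u(t)\le D$. The cost of a feasible control is $\int_{t_0}^{t_0+T} C_g(\tau)\big(P_{\mathrm{load}}(\tau)-\eta_{\mathrm{pv}}P_{\mathrm{pv}}(\tau)+u(\tau)\big)\,d\tau + K\,\Delta C(t_0+T)$. Define $S_1=\{t\in[t_0,t_0+T] : D+\eta_{\mathrm{pv}}P_{\mathrm{pv}}(t)-P_{\mathrm{load}}(t)<0\}$, $S_2=\{t\in[t_0,t_0+T] : D+\eta_{\mathrm{pv}}P_{\mathrm{pv}}(t)-P_{\mathrm{load}}(t)=0\}$, $S_3=\{t\in[t_0,t_0+T] : D+\eta_{\mathrm{pv}}P_{\mathrm{pv}}(t)-P_{\mathrm{load}}(t)>0\}$. *)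

theory Defs
  imports "HOL-Analysis.Analysis"
begin

definition piecewise_continuous_on :: "real \<Rightarrow> real \<Rightarrow> (real \<Rightarrow> real) \<Rightarrow> bool" where
  "piecewise_continuous_on a b f \<longleftrightarrow>
     (\<exists>S. finite S \<and> continuous_on ({a..b} - S) f \<and>
        (\<forall>s\<in>S \<inter> {a..b}.
           (s < b \<longrightarrow> (\<exists>l. (f \<longlongrightarrow> l) (at_right s))) \<and>
           (a < s \<longrightarrow> (\<exists>l. (f \<longlongrightarrow> l) (at_left s)))))"

definition EB_rate :: "real \<Rightarrow> real \<Rightarrow> real" where
  "EB_rate etaB v = (if v < 0 then v / etaB else etaB * v)"

definition DC_rate :: "real \<Rightarrow> real \<Rightarrow> real \<Rightarrow> real" where
  "DC_rate Z etaB v = (if v < 0 then - Z * v / etaB else 0)"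

text \<open>Solutions of the state equations with E_B(t0) = 0, Delta C(t0) = 0.\<close>
definition E_B :: "real \<Rightarrow> real \<Rightarrow> (real \<Rightarrow> real) \<Rightarrow> real \<Rightarrow> real" where
  "E_B etaB t0 u t = integral {t0..t} (\<lambda>\<tau>. EB_rate etaB (u \<tau>))"

definition Delta_C :: "real \<Rightarrow> real \<Rightarrow> real \<Rightarrow> (real \<Rightarrow> real) \<Rightarrow> real \<Rightarrow> real" where
  "Delta_C Z etaB t0 u t = integral {t0..t} (\<lambda>\<tau>. DC_rate Z etaB (u \<tau>))"

definition feasible ::
  "real \<Rightarrow> real \<Rightarrow> (real \<Rightarrow> real) \<Rightarrow> (real \<Rightarrow> real) \<Rightarrow> real \<Rightarrow> real \<Rightarrow> real \<Rightarrow> real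
   \<Rightarrow> real \<Rightarrow> real \<Rightarrow> (real \<Rightarrow> real) \<Rightarrow> bool" where
  "feasible t0 T Ppv Pload etapv etaB Z Tc D Cref u \<longleftrightarrow>
     continuous_on {t0..t0+T} u \<and>
     (\<forall>t\<in>{t0..t0+T}.
        E_B etaB t0 u t \<ge> 0 \<and>
        E_B etaB t0 u t + Delta_C Z etaB t0 u t \<le> Cref \<and>
        (u t > 0 \<longrightarrow> etaB * u t * Tc + Delta_C Z etaB t0 u t \<le> Cref) \<and>
        (u t < 0 \<longrightarrow> - (u t / etaB) * Tc + Delta_C Z etaB t0 u t \<le> Cref) \<and>
        Pload t - etapv * Ppv t + u t \<le> D)"

definition cost ::
  "real \<Rightarrow> real \<Rightarrow> (real \<Rightarrow> real) \<Rightarrow> (real \<Rightarrow> real) \<Rightarrow> (real \<Rightarrow> real) \<Rightarrow> real \<Rightarrow> real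
   \<Rightarrow> real \<Rightarrow> real \<Rightarrow> (real \<Rightarrow> real) \<Rightarrow> real" where
  "cost t0 T Ppv Pload Cg etapv etaB K Z u =
     integral {t0..t0+T} (\<lambda>\<tau>. Cg \<tau> * (Pload \<tau> - etapv * Ppv \<tau> + u \<tau>))
     + K * Delta_C Z etaB t0 u (t0 + T)"

definition S1 :: "real \<Rightarrow> real \<Rightarrow> (real \<Rightarrow> real) \<Rightarrow> (real \<Rightarrow> real) \<Rightarrow> real \<Rightarrow> real \<Rightarrow> real set" where
  "S1 t0 T Ppv Pload etapv D = {t\<in>{t0..t0+T}. D + etapv * Ppv t - Pload t < 0}"
definition S2 :: "real \<Rightarrow> real \<Rightarrow> (real \<Rightarrow> real) \<Rightarrow> (real \<Rightarrow> real) \<Rightarrow> real \<Rightarrow> real \<Rightarrow> real set" where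
  "S2 t0 T Ppv Pload etapv D = {t\<in>{t0..t0+T}. D + etapv * Ppv t - Pload t = 0}"
definition S3 :: "real \<Rightarrow> real \<Rightarrow> (real \<Rightarrow> real) \<Rightarrow> (real \<Rightarrow> real) \<Rightarrow> real \<Rightarrow> real \<Rightarrow> real set" where
  "S3 t0 T Ppv Pload etapv D = {t\<in>{t0..t0+T}. D + etapv * Ppv t - Pload t > 0}"

end

theory Submission
  imports Defs
begin

text \<open>A feasible control is bounded above by the grid margin
  \<open>D + \<eta>\<^sub>p\<^sub>v P\<^sub>p\<^sub>v - P\<^sub>l\<^sub>o\<^sub>a\<^sub>d\<close>, so it is negative on \<open>S\<^sub>1\<close> and nonpositive off \<open>S\<^sub>3\<close>.
  On any initial interval \<open>[t\<^sub>0, s]\<close> where the control is nonpositive the battery only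
  discharges, so \<open>E\<^sub>B(s) = \<integral> u/\<eta>\<^sub>B \<le> 0\<close>; together with \<open>E\<^sub>B(s) \<ge> 0\<close> and continuity this
  forces \<open>u = 0\<close> there. If \<open>S\<^sub>3 = \<emptyset>\<close> this applies on the whole horizon. If \<open>t\<^sub>0 \<in> S\<^sub>1\<close>, or
  some point of \<open>S\<^sub>1\<close> precedes all of \<open>S\<^sub>3\<close>, it applies up to a point of \<open>S\<^sub>1\<close>, where the
  control would have to be both zero and negative: then no control is feasible.\<close>

lemma continuous_nonpos_integral_nonneg_imp_zero:
  fixes f :: "real \<Rightarrow> real"
  assumes cont: "continuous_on {a..b} f" and "a < b"
    and nonpos: "\<And>x. x \<in> {a..b} \<Longrightarrow> f x \<le> 0"
    and "integral {a..b} f \<ge> 0"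
  shows "\<forall>x\<in>{a..b}. f x = 0"
proof -
  have cont_neg: "continuous_on {a..b} (\<lambda>x. - f x)"
    using cont by (intro continuous_intros)
  have "integral {a..b} (\<lambda>x. - f x) \<ge> 0"
    using integral_nonneg[OF integrable_continuous_interval[OF cont_neg]] nonpos by fastforce
  with \<open>integral {a..b} f \<ge> 0\<close> have "integral {a..b} (\<lambda>x. - f x) = 0"
    by (simp add: integral_neg)
  with integral_eq_0_iff[OF cont_neg \<open>a < b\<close>] nonpos show ?thesis
    by fastforce
qed

lemma continuous_negative_at_left_end_imp_nonpos_near:
  fixes f :: "real \<Rightarrow> real"
  assumes cont: "continuous_on {a..b} f" and "a < b" and "f a < 0"
  obtains s where "a < s" "s \<le> b" "\<forall>t\<in>{a..s}. f t \<le> 0"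
proof -
  obtain d where "d > 0" and d: "\<forall>x\<in>{a..b}. dist x a < d \<longrightarrow> dist (f x) (f a) < - f a"
    using cont \<open>a < b\<close> \<open>f a < 0\<close> unfolding continuous_on_iff
    by (metis atLeastAtMost_iff neg_0_less_iff_less order_refl order_less_imp_le)
  define s where "s = a + min (d / 2) (b - a)"
  have "\<forall>t\<in>{a..s}. f t \<le> 0"
  proof
    fix t assume "t \<in> {a..s}"
    then have "t \<in> {a..b}" "dist t a < d"
      using \<open>d > 0\<close> by (auto simp: s_def dist_real_def)
    with d show "f t \<le> 0" by (fastforce simp: dist_real_def)
  qed
  moreover have "a < s" "s \<le> b" using \<open>d > 0\<close> \<open>a < b\<close> by (auto simp: s_def)
  ultimately show thesis using that by blast
qed

lemma EB_rate_nonpos: "v \<le> 0 \<Longrightarrow> EB_rate etaB v = v / etaB"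
  by (cases "v < 0") (auto simp: EB_rate_def)

lemma feasible_continuous:
  "feasible t0 T Ppv Pload etapv etaB Z Tc D Cref u \<Longrightarrow> continuous_on {t0..t0+T} u"
  by (simp add: feasible_def)

lemma feasible_le_margin:
  "feasible t0 T Ppv Pload etapv etaB Z Tc D Cref u \<Longrightarrow> t \<in> {t0..t0+T}
    \<Longrightarrow> u t \<le> D + etapv * Ppv t - Pload t"
  unfolding feasible_def by fastforce

lemma feasible_neg_on_S1:
  "feasible t0 T Ppv Pload etapv etaB Z Tc D Cref u \<Longrightarrow> t \<in> S1 t0 T Ppv Pload etapv D
    \<Longrightarrow> u t < 0"
  using feasible_le_margin unfolding S1_def by fastforce

lemma feasible_nonpos_off_S3:
  "feasible t0 T Ppv Pload etapv etaB Z Tc D Cref u \<Longrightarrow> t \<in> {t0..t0+T}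
    \<Longrightarrow> t \<notin> S3 t0 T Ppv Pload etapv D \<Longrightarrow> u t \<le> 0"
  using feasible_le_margin unfolding S3_def by fastforce

lemma feasible_nonpos_imp_zero:
  assumes feas: "feasible t0 T Ppv Pload etapv etaB Z Tc D Cref u"
    and "0 < etaB" and "t0 < s" "s \<le> t0 + T"
    and nonpos: "\<forall>t\<in>{t0..s}. u t \<le> 0"
  shows "\<forall>t\<in>{t0..s}. u t = 0"
proof -
  have cont: "continuous_on {t0..s} (\<lambda>t. u t / etaB)"
    using feasible_continuous[OF feas] \<open>s \<le> t0 + T\<close> \<open>0 < etaB\<close>
    by (auto intro!: continuous_intros elim: continuous_on_subset)
  have "integral {t0..s} (\<lambda>t. u t / etaB) = E_B etaB t0 u s"
    unfolding E_B_def using nonpos by (intro integral_cong) (simp add: EB_rate_nonpos)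
  also have "\<dots> \<ge> 0"
    using feas \<open>t0 < s\<close> \<open>s \<le> t0 + T\<close> unfolding feasible_def by auto
  finally have "\<forall>t\<in>{t0..s}. u t / etaB = 0"
    using continuous_nonpos_integral_nonneg_imp_zero[OF cont \<open>t0 < s\<close>] nonpos \<open>0 < etaB\<close>
    by (simp add: divide_nonpos_pos)
  then show ?thesis using \<open>0 < etaB\<close> by simp
qed

lemma no_feasible_if_start_in_S1:
  assumes "T > 0" "0 < etaB" "t0 \<in> S1 t0 T Ppv Pload etapv D"
  shows "\<not> feasible t0 T Ppv Pload etapv etaB Z Tc D Cref u"
proof
  assume feas: "feasible t0 T Ppv Pload etapv etaB Z Tc D Cref u"
  have "u t0 < 0" using feasible_neg_on_S1[OF feas] assms(3) .
  then obtain s where "t0 < s" "s \<le> t0 + T" "\<forall>t\<in>{t0..s}. u t \<le> 0"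
    using continuous_negative_at_left_end_imp_nonpos_near[OF feasible_continuous[OF feas]]
      \<open>T > 0\<close> by auto
  with feasible_nonpos_imp_zero[OF feas \<open>0 < etaB\<close>] have "u t0 = 0" by auto
  with \<open>u t0 < 0\<close> show False by simp
qed

lemma no_feasible_if_S1_point_precedes_S3:
  assumes "0 < etaB" "t0 \<notin> S1 t0 T Ppv Pload etapv D" "t1 \<in> S1 t0 T Ppv Pload etapv D"
    and precedes: "\<forall>t3\<in>S3 t0 T Ppv Pload etapv D. t1 < t3"
  shows "\<not> feasible t0 T Ppv Pload etapv etaB Z Tc D Cref u"
proof
  assume feas: "feasible t0 T Ppv Pload etapv etaB Z Tc D Cref u"
  have "t1 \<in> {t0..t0+T}" using assms(3) by (simp add: S1_def)
  with assms(2,3) have "t0 < t1" by (cases "t0 = t1") auto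
  have "\<forall>t\<in>{t0..t1}. u t \<le> 0"
    using feasible_nonpos_off_S3[OF feas] precedes \<open>t1 \<in> {t0..t0+T}\<close> by force
  with feasible_nonpos_imp_zero[OF feas \<open>0 < etaB\<close> \<open>t0 < t1\<close>] \<open>t1 \<in> {t0..t0+T}\<close>
  have "u t1 = 0" by auto
  with feasible_neg_on_S1[OF feas assms(3)] show False by simp
qed

lemma feasible_vanishes_if_S3_empty:
  assumes "T > 0" "0 < etaB" "S3 t0 T Ppv Pload etapv D = {}"
    and feas: "feasible t0 T Ppv Pload etapv etaB Z Tc D Cref u"
  shows "\<forall>t\<in>{t0..t0+T}. u t = 0"
  using feasible_nonpos_imp_zero[OF feas \<open>0 < etaB\<close>, of "t0 + T"] feasible_nonpos_off_S3[OF feas]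
    assms(1,3)
  by simp

lemma feasible_zero_control:
  assumes "Cref \<ge> 0" and "\<forall>t\<in>{t0..t0+T}. Pload t - etapv * Ppv t \<le> D"
  shows "feasible t0 T Ppv Pload etapv etaB Z Tc D Cref (\<lambda>_. 0)"
proof -
  have "E_B etaB t0 (\<lambda>_. 0) t = 0" "Delta_C Z etaB t0 (\<lambda>_. 0) t = 0" for t
    by (simp_all add: E_B_def EB_rate_def Delta_C_def DC_rate_def)
  with assms show ?thesis by (simp add: feasible_def)
qed

theorem proposition1:
  fixes t0 T etapv etaB K Z Tc D Cref :: real
    and Ppv Pload Cg :: "real \<Rightarrow> real"
  assumes "T > 0"
    and "\<forall>t\<in>{t0..t0+T}. Ppv t \<ge> 0"
    and "piecewise_continuous_on t0 (t0+T) Pload"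
    and "\<forall>t\<in>{t0..t0+T}. Cg t \<ge> 0"
    and "0 < etapv" "etapv \<le> 1" "0 < etaB" "etaB \<le> 1"
    and "K > 0" "Z > 0" "Tc > 0" "D > 0" "Cref \<ge> 0"
    and "t0 \<in> S1 t0 T Ppv Pload etapv D
         \<or> S3 t0 T Ppv Pload etapv D = {}
         \<or> (t0 \<notin> S1 t0 T Ppv Pload etapv D \<and> S3 t0 T Ppv Pload etapv D \<noteq> {}
            \<and> S1 t0 T Ppv Pload etapv D \<noteq> {}
            \<and> (\<exists>t1\<in>S1 t0 T Ppv Pload etapv D. \<forall>t3\<in>S3 t0 T Ppv Pload etapv D. t1 < t3))"
  shows "(\<not> (\<exists>u. feasible t0 T Ppv Pload etapv etaB Z Tc D Cref u))
         \<or> (feasible t0 T Ppv Pload etapv etaB Z Tc D Cref (\<lambda>_. 0)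
            \<and> (\<forall>u. feasible t0 T Ppv Pload etapv etaB Z Tc D Cref u
                   \<longrightarrow> (\<forall>t\<in>{t0..t0+T}. u t = 0)))"
proof (cases "S3 t0 T Ppv Pload etapv D = {}")
  case False
  with assms(14) have "\<not> feasible t0 T Ppv Pload etapv etaB Z Tc D Cref u" for u
    using no_feasible_if_start_in_S1[OF \<open>T > 0\<close> \<open>0 < etaB\<close>]
      no_feasible_if_S1_point_precedes_S3[OF \<open>0 < etaB\<close>] by metis
  then show ?thesis by blast
next
  case True
  note vanishes = feasible_vanishes_if_S3_empty[OF \<open>T > 0\<close> \<open>0 < etaB\<close> True]
  show ?thesis
  proof (cases "\<exists>u. feasible t0 T Ppv Pload etapv etaB Z Tc D Cref u")
    case True
    then obtain u where feas: "feasible t0 T Ppv Pload etapv etaB Z Tc D Cref u" by blast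
    have "\<forall>t\<in>{t0..t0+T}. Pload t - etapv * Ppv t \<le> D"
      using feasible_le_margin[OF feas] vanishes[OF feas] by fastforce
    with feasible_zero_control \<open>Cref \<ge> 0\<close> vanishes show ?thesis by blast
  qed simp
qed

end
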